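(* For every $\mu\in[0,2]$, with $v_1=\frac{2}{2+\mu}$, \[ \psi(C^{\searrow}_\mu)=-2v_1^2+6v_1-5+\frac1{v_1},\qquad \xi(C^{\searrow}_\mu)=-4v_1^2+20v_1-17+\frac{2}{v_1}-\frac1{v_1^2}-12\ln(v_1). \] As $\mu$ ranges over $[0,2]$, $\mu\mapsto\psi(C^{\searrow}_\mu)$ is continuous and strictly decreasing from $0$ to $-\frac12$, and $\mu\mapsto\xi(C^{\searrow}_\mu)$ is continuous and strictly increasing from $0$ to $12\ln 2-8$.
   Context: For $\mu\in[0,2]$ let $v_0=\frac{\mu}{2+\mu}$, $v_1=\frac{2}{2+\mu}$ and define $h_\mu(t,v)=h_1(v)\mathbf{1}_{\{t\le v\}}+h_2(v)\mathbf{1}_{\{t>v\}}$ on $[0,1]^2$, where $(h_1,h_2)(v)=(0,\frac{v}{1-v})$ for $v\in[0,v_0]$, $(h_1,h_2)(v)=(v-\frac{\mu}{2}(1-v),\,v+\frac{\mu}{2}v)$ for $v\in(v_0,v_1]$, and $(h_1,h_2)(v)=(2-\frac1v,\,1)$ for $v\in(v_1,1]$. $C^{\searrow}_\mu(u,v):=\int_0^u h_\mu(t,v)\,dt$ (this is in general not a copula). For any function $C$ of this form with first partial derivative $h=\partial_1C$, set $\xi(C)=6\int_0^1\int_0^1 h(t,v)^2\,dt\,dv-2$ and $\psi(C)=6\int_0^1\int_0^1\mathbf{1}_{\{t\le v\}}h(t,v)\,dt\,dv-2$ (for copulas these coincide with $6\int\int(\partial_1C)^2-2$ and $6\int_0^1C(u,u)\,du-2$).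 *)

theory Defs
  imports "HOL-Analysis.Analysis"
begin

definition v0 :: "real \<Rightarrow> real" where "v0 \<mu> = \<mu> / (2 + \<mu>)"
definition v1 :: "real \<Rightarrow> real" where "v1 \<mu> = 2 / (2 + \<mu>)"

definition h1 :: "real \<Rightarrow> real \<Rightarrow> real" where
  "h1 \<mu> v = (if v \<le> v0 \<mu> then 0
              else if v \<le> v1 \<mu> then v - \<mu> / 2 * (1 - v)
              else 2 - 1 / v)"

definition h2 :: "real \<Rightarrow> real \<Rightarrow> real" where
  "h2 \<mu> v = (if v \<le> v0 \<mu> then v / (1 - v)
              else if v \<le> v1 \<mu> then v + \<mu> / 2 * v
              else 1)"

definition h_mu :: "real \<Rightarrow> real \<Rightarrow> real \<Rightarrow> real" where
  "h_mu \<mu> t v = (if t \<le> v then h1 \<mu> v else h2 \<mu> v)"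

definition C_searrow :: "real \<Rightarrow> real \<Rightarrow> real \<Rightarrow> real" where
  "C_searrow \<mu> u v = integral {0..u} (\<lambda>t. h_mu \<mu> t v)"

text \<open>xi and psi computed from the first partial derivative h of C (double integrals over the
  unit square, written as iterated integrals).\<close>
definition xi_h :: "(real \<Rightarrow> real \<Rightarrow> real) \<Rightarrow> real" where
  "xi_h h = 6 * integral {0..1} (\<lambda>v. integral {0..1} (\<lambda>t. (h t v)\<^sup>2)) - 2"

definition psi_h :: "(real \<Rightarrow> real \<Rightarrow> real) \<Rightarrow> real" where
  "psi_h h = 6 * integral {0..1} (\<lambda>v. integral {0..1} (\<lambda>t. (if t \<le> v then 1 else 0) * h t v)) - 2"

end

theory Submission imports Defs begin

(* The integrand h t v depends on t only through whether t \<le> v, so the inner t-integrals in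
   psi and xi are elementary and both reduce to one-dimensional integrals in v.  In terms of
   w = v1 \<mu> one has v0 \<mu> = 1 - w and \<mu>/2 = 1/w - 1, and on the pieces [0,1-w], [1-w,w], [w,1]
   these integrands are rational functions with explicit antiderivatives.  As \<mu> runs through
   [0,2], w decreases from 1 to 1/2, and on (1/2,1) the closed forms have derivatives
   (2w-1)(1+2w-2w^2)/w^2 > 0 (for psi) and (w-1)(2w-1)(2+4w(1-w))/w^3 < 0 (for xi). *)

lemma has_integral_antiderivative_interior:
  fixes f g G :: "real \<Rightarrow> real"
  assumes "a \<le> b"
    and "\<And>x. x \<in> {a<..<b} \<Longrightarrow> f x = g x"
    and "\<And>x. x \<in> {a..b} \<Longrightarrow> (G has_real_derivative g x) (at x)"
  shows "(f has_integral (G b - G a)) {a..b}"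
proof (rule has_integral_spike_finite[of "{a, b}"])
  show "(g has_integral (G b - G a)) {a..b}"
    using assms(1,3) fundamental_theorem_of_calculus has_real_derivative_iff_has_vector_derivative
      has_vector_derivative_at_within by blast
qed (use assms(2) in auto)

lemma has_integral_piecewise3:
  fixes f g h F G H :: "real \<Rightarrow> real"
  assumes "a \<le> b" "b \<le> c" "c \<le> d"
    and "\<And>x. x \<in> {a..b} \<Longrightarrow> (F has_real_derivative f x) (at x)"
    and "\<And>x. x \<in> {b..c} \<Longrightarrow> (G has_real_derivative g x) (at x)"
    and "\<And>x. x \<in> {c..d} \<Longrightarrow> (H has_real_derivative h x) (at x)"
  shows "((\<lambda>x. if x \<le> b then f x else if x \<le> c then g x else h x) has_integral
           (F b - F a) + (G c - G b) + (H d - H c)) {a..d}"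
proof -
  let ?p = "\<lambda>x. if x \<le> b then f x else if x \<le> c then g x else h x"
  have "(?p has_integral (F b - F a)) {a..b}"
    by (rule has_integral_antiderivative_interior) (use assms in auto)
  moreover have "(?p has_integral (G c - G b)) {b..c}"
    by (rule has_integral_antiderivative_interior) (use assms in auto)
  moreover have "(?p has_integral (H d - H c)) {c..d}"
    by (rule has_integral_antiderivative_interior) (use assms in auto)
  ultimately show ?thesis
    using assms(1-3) has_integral_combine[of a b c ?p] has_integral_combine[of a c d ?p]
    by (meson order.trans)
qed

lemma integral_if_le_const:
  fixes A B v :: real
  assumes "0 \<le> v" "v \<le> 1"
  shows "integral {0..1} (\<lambda>t. if t \<le> v then A else B) = v * A + (1 - v) * B"
proof -
  have "((\<lambda>t. if t \<le> v then A else B) has_integral (A * v - A * 0)) {0..v}"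
    by (rule has_integral_antiderivative_interior[where g = "\<lambda>_. A"])
       (auto intro!: derivative_eq_intros simp: assms)
  moreover have "((\<lambda>t. if t \<le> v then A else B) has_integral (B * 1 - B * v)) {v..1}"
    by (rule has_integral_antiderivative_interior[where g = "\<lambda>_. B"])
       (auto intro!: derivative_eq_intros simp: assms)
  ultimately have "((\<lambda>t. if t \<le> v then A else B) has_integral (A * v + (B - B * v))) {0..1}"
    using has_integral_combine[OF assms] by simp
  then show ?thesis
    by (simp add: integral_unique algebra_simps)
qed

lemma psi_h_if_le:
  "psi_h (\<lambda>t v. if t \<le> v then g1 v else g2 v) = 6 * integral {0..1} (\<lambda>v. v * g1 v) - 2"
proof -
  have "integral {0..1} (\<lambda>t. (if t \<le> v then 1 else 0) * (if t \<le> v then g1 v else g2 v))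
      = v * g1 v" if "v \<in> {0..1}" for v
    using integral_if_le_const[of v "g1 v" 0] that by (simp add: if_distrib cong: if_cong)
  then show ?thesis
    unfolding psi_h_def by (metis (no_types, lifting) atLeastAtMost_iff integral_cong)
qed

lemma xi_h_if_le:
  "xi_h (\<lambda>t v. if t \<le> v then g1 v else g2 v)
     = 6 * integral {0..1} (\<lambda>v. v * (g1 v)\<^sup>2 + (1 - v) * (g2 v)\<^sup>2) - 2"
proof -
  have "integral {0..1} (\<lambda>t. (if t \<le> v then g1 v else g2 v)\<^sup>2)
      = v * (g1 v)\<^sup>2 + (1 - v) * (g2 v)\<^sup>2" if "v \<in> {0..1}" for v
    using integral_if_le_const[of v "(g1 v)\<^sup>2" "(g2 v)\<^sup>2"] that
    by (simp add: if_distrib[of "\<lambda>x. x\<^sup>2"])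
  then show ?thesis
    unfolding xi_h_def by (metis (no_types, lifting) atLeastAtMost_iff integral_cong)
qed

lemma v1_bounds:
  assumes "\<mu> \<in> {0..2}"
  shows "1/2 \<le> v1 \<mu>" "v1 \<mu> \<le> 1"
  using assms by (auto simp: v1_def field_simps)

lemma v1_strict_antimono: "strict_antimono_on {0..} v1"
  by (rule monotone_onI) (auto simp: v1_def field_simps)

lemma continuous_on_v1: "continuous_on {0..} v1"
  unfolding v1_def by (auto intro!: continuous_intros)

lemma h1_eq:
  assumes "\<mu> \<in> {0..2}"
  shows "h1 \<mu> v = (if v \<le> 1 - v1 \<mu> then 0
                    else if v \<le> v1 \<mu> then (v - 1 + v1 \<mu>) / v1 \<mu> else 2 - 1 / v)"
  using assms by (auto simp: h1_def v0_def v1_def field_simps)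

lemma h2_eq:
  assumes "\<mu> \<in> {0..2}"
  shows "h2 \<mu> v = (if v \<le> 1 - v1 \<mu> then v / (1 - v) else if v \<le> v1 \<mu> then v / v1 \<mu> else 1)"
  using assms by (auto simp: h2_def v0_def v1_def field_simps)

lemma psi_integrand_eq:
  assumes "\<mu> \<in> {0..2}"
  shows "v * h1 \<mu> v = (if v \<le> 1 - v1 \<mu> then 0
                        else if v \<le> v1 \<mu> then v * (v - 1 + v1 \<mu>) / v1 \<mu> else 2 * v - 1)"
  using v1_bounds[OF assms] by (auto simp: h1_eq[OF assms] field_simps)

lemma xi_integrand_eq:
  assumes "\<mu> \<in> {0..2}"
  shows "v * (h1 \<mu> v)\<^sup>2 + (1 - v) * (h2 \<mu> v)\<^sup>2
           = (if v \<le> 1 - v1 \<mu> then v\<^sup>2 / (1 - v)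
              else if v \<le> v1 \<mu> then ((2 * v1 \<mu> - 1) * v\<^sup>2 + (1 - v1 \<mu>)\<^sup>2 * v) / (v1 \<mu>)\<^sup>2
              else 3 * v - 3 + 1 / v)"
proof (cases "v \<le> 1 - v1 \<mu>")
  case True
  with v1_bounds[OF assms] have "1 - v > 0" by linarith
  with True show ?thesis
    by (simp add: h1_eq[OF assms] h2_eq[OF assms] power2_eq_square)
next
  case False
  then show ?thesis
    using v1_bounds[OF assms]
    by (auto simp: h1_eq[OF assms] h2_eq[OF assms] field_simps power2_eq_square)
qed

definition psi_of_v1 :: "real \<Rightarrow> real" where
  "psi_of_v1 w = - 2 * w\<^sup>2 + 6 * w - 5 + 1 / w"

definition xi_of_v1 :: "real \<Rightarrow> real" where
  "xi_of_v1 w = - 4 * w\<^sup>2 + 20 * w - 17 + 2 / w - 1 / w\<^sup>2 - 12 * ln w"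

lemma psi_h_h_mu:
  assumes \<mu>: "\<mu> \<in> {0..2}"
  shows "psi_h (h_mu \<mu>) = psi_of_v1 (v1 \<mu>)"
proof -
  define w where "w = v1 \<mu>"
  have w: "1/2 \<le> w" "w \<le> 1"
    using v1_bounds[OF \<mu>] by (simp_all add: w_def)
  define G where "G v = (v ^ 3 / 3 - (1 - w) * v\<^sup>2 / 2) / w" for v
  have G': "(G has_real_derivative v * (v - 1 + w) / w) (at v)" for v
    unfolding G_def using w
    by (auto intro!: derivative_eq_intros simp: field_simps power2_eq_square)
  have "((\<lambda>v. v * h1 \<mu> v) has_integral (0 - 0) + (G w - G (1 - w)) + ((1\<^sup>2 - 1) - (w\<^sup>2 - w)))
          {0..1}"
    unfolding psi_integrand_eq[OF \<mu>] w_def[symmetric]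
    by (rule has_integral_piecewise3[where F = "\<lambda>_. 0" and H = "\<lambda>v. v\<^sup>2 - v"])
       (use w G' in \<open>auto intro!: derivative_eq_intros\<close>)
  then show ?thesis
    using w unfolding h_mu_def[abs_def] psi_h_if_le
    by (simp add: integral_unique psi_of_v1_def G_def w_def[symmetric]
                  field_simps power2_eq_square power3_eq_cube)
qed

lemma xi_h_h_mu:
  assumes \<mu>: "\<mu> \<in> {0..2}"
  shows "xi_h (h_mu \<mu>) = xi_of_v1 (v1 \<mu>)"
proof -
  define w where "w = v1 \<mu>"
  have w: "1/2 \<le> w" "w \<le> 1"
    using v1_bounds[OF \<mu>] by (simp_all add: w_def)
  define F1 where "F1 v = - ln (1 - v) - v - v\<^sup>2 / 2" for v :: real
  define F2 where "F2 v = ((2 * w - 1) * v ^ 3 / 3 + (1 - w)\<^sup>2 * v\<^sup>2 / 2) / w\<^sup>2" for v :: real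
  define F3 where "F3 v = 3 * v\<^sup>2 / 2 - 3 * v + ln v" for v :: real
  have F1': "(F1 has_real_derivative v\<^sup>2 / (1 - v)) (at v)" if "v < 1" for v
    unfolding F1_def using that
    by (auto intro!: derivative_eq_intros simp: field_simps power2_eq_square)
  have F3': "(F3 has_real_derivative 3 * v - 3 + 1 / v) (at v)" if "v > 0" for v
    unfolding F3_def using that by (auto intro!: derivative_eq_intros simp: field_simps)
  have "((\<lambda>v. v * (h1 \<mu> v)\<^sup>2 + (1 - v) * (h2 \<mu> v)\<^sup>2) has_integral
          (F1 (1 - w) - F1 0) + (F2 w - F2 (1 - w)) + (F3 1 - F3 w)) {0..1}"
    unfolding xi_integrand_eq[OF \<mu>] w_def[symmetric]
  proof (rule has_integral_piecewise3)
    show "(F2 has_real_derivative ((2 * w - 1) * v\<^sup>2 + (1 - w)\<^sup>2 * v) / w\<^sup>2) (at v)" for v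
      unfolding F2_def using w
      by (auto intro!: derivative_eq_intros simp: field_simps power2_eq_square)
  qed (use w F1' F3' in auto)
  then show ?thesis
    using w unfolding h_mu_def[abs_def] xi_h_if_le
    by (simp add: integral_unique xi_of_v1_def F1_def F2_def F3_def w_def[symmetric]
                  field_simps power2_eq_square power3_eq_cube)
qed

lemma continuous_on_psi_of_v1: "continuous_on {0<..} psi_of_v1"
  unfolding psi_of_v1_def by (auto intro!: continuous_intros)

lemma continuous_on_xi_of_v1: "continuous_on {0<..} xi_of_v1"
  unfolding xi_of_v1_def by (auto intro!: continuous_intros)

lemma psi_of_v1_strict_mono: "strict_mono_on {1/2..1} psi_of_v1"
proof (rule monotone_onI)
  fix a b :: real assume ab: "a \<in> {1/2..1}" "b \<in> {1/2..1}" "a < b"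
  show "psi_of_v1 a < psi_of_v1 b"
  proof (rule DERIV_pos_imp_increasing_open[OF \<open>a < b\<close>])
    fix x assume "a < x" "x < b"
    then have x: "1/2 < x" "x < 1" using ab by auto
    have "(psi_of_v1 has_real_derivative (2 * x - 1) * (1 + 2 * x * (1 - x)) / x\<^sup>2) (at x)"
      unfolding psi_of_v1_def using x
      by (auto intro!: derivative_eq_intros simp: field_simps power2_eq_square)
    moreover have "(2 * x - 1) * (1 + 2 * x * (1 - x)) / x\<^sup>2 > 0"
      using x by (intro divide_pos_pos mult_pos_pos add_pos_pos) auto
    ultimately show "\<exists>y. (psi_of_v1 has_real_derivative y) (at x) \<and> y > 0" by blast
  next
    show "continuous_on {a..b} psi_of_v1"
      using ab by (auto intro: continuous_on_subset[OF continuous_on_psi_of_v1])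
  qed
qed

lemma xi_of_v1_strict_antimono: "strict_antimono_on {1/2..1} xi_of_v1"
proof (rule monotone_onI)
  fix a b :: real assume ab: "a \<in> {1/2..1}" "b \<in> {1/2..1}" "a < b"
  show "xi_of_v1 b < xi_of_v1 a"
  proof (rule DERIV_neg_imp_decreasing_open[OF \<open>a < b\<close>])
    fix x assume "a < x" "x < b"
    then have x: "1/2 < x" "x < 1" using ab by auto
    have "(xi_of_v1 has_real_derivative
             (x - 1) * ((2 * x - 1) * (2 + 4 * x * (1 - x))) / x ^ 3) (at x)"
      unfolding xi_of_v1_def using x
      by (auto intro!: derivative_eq_intros
               simp: field_simps power2_eq_square power3_eq_cube)
    moreover have "(x - 1) * ((2 * x - 1) * (2 + 4 * x * (1 - x))) / x ^ 3 < 0"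
      using x by (intro divide_neg_pos mult_neg_pos mult_pos_pos add_pos_pos) auto
    ultimately show "\<exists>y. (xi_of_v1 has_real_derivative y) (at x) \<and> y < 0" by blast
  next
    show "continuous_on {a..b} xi_of_v1"
      using ab by (auto intro: continuous_on_subset[OF continuous_on_xi_of_v1])
  qed
qed

lemma continuous_on_psi_h_h_mu: "continuous_on {0..2} (\<lambda>\<mu>. psi_h (h_mu \<mu>))"
proof -
  have "continuous_on {0..2} (\<lambda>\<mu>. psi_of_v1 (v1 \<mu>))"
    using v1_bounds
    by (intro continuous_on_compose2[OF continuous_on_psi_of_v1
                                      continuous_on_subset[OF continuous_on_v1]]) force+
  then show ?thesis
    by (rule continuous_on_cong[THEN iffD1, OF refl, rotated]) (simp add: psi_h_h_mu)
qed

lemma continuous_on_xi_h_h_mu: "continuous_on {0..2} (\<lambda>\<mu>. xi_h (h_mu \<mu>))"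
proof -
  have "continuous_on {0..2} (\<lambda>\<mu>. xi_of_v1 (v1 \<mu>))"
    using v1_bounds
    by (intro continuous_on_compose2[OF continuous_on_xi_of_v1
                                      continuous_on_subset[OF continuous_on_v1]]) force+
  then show ?thesis
    by (rule continuous_on_cong[THEN iffD1, OF refl, rotated]) (simp add: xi_h_h_mu)
qed

lemma psi_h_h_mu_strict_antimono: "strict_antimono_on {0..2} (\<lambda>\<mu>. psi_h (h_mu \<mu>))"
proof (rule monotone_onI)
  fix a b :: real assume ab: "a \<in> {0..2}" "b \<in> {0..2}" "a < b"
  then have "v1 b < v1 a"
    using monotone_onD[OF v1_strict_antimono] by auto
  then show "psi_h (h_mu b) < psi_h (h_mu a)"
    using monotone_onD[OF psi_of_v1_strict_mono] v1_bounds ab by (simp add: psi_h_h_mu)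
qed

lemma xi_h_h_mu_strict_mono: "strict_mono_on {0..2} (\<lambda>\<mu>. xi_h (h_mu \<mu>))"
proof (rule monotone_onI)
  fix a b :: real assume ab: "a \<in> {0..2}" "b \<in> {0..2}" "a < b"
  then have "v1 b < v1 a"
    using monotone_onD[OF v1_strict_antimono] by auto
  then show "xi_h (h_mu a) < xi_h (h_mu b)"
    using monotone_onD[OF xi_of_v1_strict_antimono] v1_bounds ab by (simp add: xi_h_h_mu)
qed

theorem mainTheorem5:
  shows "(\<forall>\<mu>\<in>{0..2::real}.
            psi_h (h_mu \<mu>) = - 2 * (v1 \<mu>)\<^sup>2 + 6 * v1 \<mu> - 5 + 1 / v1 \<mu>
          \<and> xi_h (h_mu \<mu>) = - 4 * (v1 \<mu>)\<^sup>2 + 20 * v1 \<mu> - 17 + 2 / v1 \<mu>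
                               - 1 / (v1 \<mu>)\<^sup>2 - 12 * ln (v1 \<mu>))
       \<and> continuous_on {0..2} (\<lambda>\<mu>. psi_h (h_mu \<mu>))
       \<and> (\<forall>a\<in>{0..2}. \<forall>b\<in>{0..2}. a < b \<longrightarrow> psi_h (h_mu b) < psi_h (h_mu a))
       \<and> psi_h (h_mu 0) = 0 \<and> psi_h (h_mu 2) = - 1 / 2
       \<and> continuous_on {0..2} (\<lambda>\<mu>. xi_h (h_mu \<mu>))
       \<and> (\<forall>a\<in>{0..2}. \<forall>b\<in>{0..2}. a < b \<longrightarrow> xi_h (h_mu a) < xi_h (h_mu b))
       \<and> xi_h (h_mu 0) = 0 \<and> xi_h (h_mu 2) = 12 * ln 2 - 8"
proof -
  have "\<forall>\<mu>\<in>{0..2::real}.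
            psi_h (h_mu \<mu>) = - 2 * (v1 \<mu>)\<^sup>2 + 6 * v1 \<mu> - 5 + 1 / v1 \<mu>
          \<and> xi_h (h_mu \<mu>) = - 4 * (v1 \<mu>)\<^sup>2 + 20 * v1 \<mu> - 17 + 2 / v1 \<mu>
                               - 1 / (v1 \<mu>)\<^sup>2 - 12 * ln (v1 \<mu>)"
    by (simp add: psi_h_h_mu xi_h_h_mu psi_of_v1_def xi_of_v1_def)
  moreover have "psi_h (h_mu 0) = 0" "psi_h (h_mu 2) = - 1 / 2"
    and "xi_h (h_mu 0) = 0" "xi_h (h_mu 2) = 12 * ln 2 - 8"
    by (simp_all add: psi_h_h_mu xi_h_h_mu v1_def psi_of_v1_def xi_of_v1_def
                      power2_eq_square ln_div)
  ultimately show ?thesis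
    using continuous_on_psi_h_h_mu continuous_on_xi_h_h_mu
      monotone_onD[OF psi_h_h_mu_strict_antimono] monotone_onD[OF xi_h_h_mu_strict_mono]
    by blast
qed

end
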